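(* In the theory $\mathfrak{T}$, the following holds for every formula $\Phi(\alpha,\beta)$ (possibly with parameters): $$\forall X\Big(\forall\alpha\in X\,\exists!\beta\,\Phi(\alpha,\beta)\ \Rightarrow\ \exists Z\,\forall\gamma\big(\gamma\in Z\iff\exists\xi\,(\xi\in X\wedge\Phi(\xi,\gamma))\big)\Big).$$
   Context: The theory $\mathfrak{T}$ is set up as follows. The universe consists of "things", each of which is either a set or a function on a set. Variables $\alpha,\beta,\gamma,\eta,\xi,\zeta,\dots$ range over all things and $X,Y,Z,\dots$ range over sets. For a set $X$, the symbols $f_X,g_X,F_X,\dots$ range over functions on $X$. The primitive predicates are $\alpha\in\beta$, $\alpha=\beta$, the ternary predicate $f:Y\twoheadrightarrow Z$ (read "$f$ has domain $Y$ and codomain $Z$") and the ternary predicate $f:\alpha\mapsto\beta$ (read "$f$ maps $\alpha$ to $\beta$"). Notation: $\alpha^+$ is the singleton $\{\alpha\}$ and $\langle\alpha,\beta\rangle:=\{\alpha,\{\alpha,\beta\}\}$. An ur-function is a function on a singleton $\alpha^+$. For a function $f$ and an argument $\alpha$ with a unique $\beta$ such that $f:\alpha\mapsto\beta$, this $\beta$ is written $f(\alpha)$. Axioms of $\mathfrak{T}$: - Extensionality for sets. - No function on a set is a set. - A set has no domain or codomain and maps nothing to anything. - There is an empty set $\emptyset$. - Pairing: for all $\alpha,\beta$ the set $\{\alpha,\beta\}$ exists. - Union (sum set). - Power set. - Infinity: $\omega$ is the set of finite Zermelo ordinals, where $0=\emptyset$ and $n+1=n^+$. - Regularity. - A function on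 a set has no elements. - (GEN-F) For nonempty $X$, every $f_X$ satisfies $f_X:Y\twoheadrightarrow Z$ for some sets $Y,Z$, and for each $\alpha\in Y$ there is a unique $\beta$ with $f_X:\alpha\mapsto\beta$. - $f_X$ has no domain other than $X$. - $f_X:\alpha\mapsto\beta$ implies $\alpha\in X$. - For nonempty $X$, if $f_X:X\twoheadrightarrow\beta$ then $\beta$ is the image set $f_X[X]=\{\gamma:\exists\eta\in X\,(f_X:\eta\mapsto\gamma)\}$. - (INV) For nonempty $X$ with $f_X:X\twoheadrightarrow Y$, for every $\beta$ the set $\{\alpha\in X: f_X:\alpha\mapsto\beta\}$ exists. - (EXT-F) $f_X=g_Y$ iff $X=Y$ and, for all $\alpha,\beta$, $f_X:\alpha\mapsto\beta \iff g_Y:\alpha\mapsto\beta$. - There is an inactive function $1_\emptyset$ with $1_\emptyset:\emptyset\twoheadrightarrow\emptyset$ that maps nothing. - (UFA) For all $\alpha,\beta$ there is an ur-function $f_{\alpha^+}$ with $f_{\alpha^+}:\alpha^+\twoheadrightarrow\beta^+$ and $f_{\alpha^+}:\alpha\mapsto\beta$. - (REG-F) If $f_X:X\twoheadrightarrow Y$, then for every $\alpha$, neither $f_X:f_X\mapsto\alpha$ nor $f_X:\alpha\mapsto f_X$. - (SUM-F, nonstandard, with a multiple quantifier over families) For every nonempty set $X$ and every family $(f_{\alpha^+})_{\alpha\in X}$ that assigns to each $\alpha\in X$ an ur-function $f_{\alpha^+}$ on $\alpha^+$, there exist a function $F_X$ and a set $Y$ with $F_X:X\twoheadrightarrow Y$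 and $F_X:\alpha\mapsto f_{\alpha^+}(\alpha)$ for every $\alpha\in X$. *)

theory Defs
  imports Main
begin

text \<open>A structure for the language of the theory T:
  a universe of things of type 'u, with
  mem a b      : a is an element of b,
  isSet a      : a is a set,
  onset f X    : f is a function on the set X (the sort of f_X),
  dc f Y Z     : f has domain Y and codomain Z,
  mp f a b     : f maps a to b.\<close>

definition is_empty :: "('u \<Rightarrow> 'u \<Rightarrow> bool) \<Rightarrow> ('u \<Rightarrow> bool) \<Rightarrow> 'u \<Rightarrow> bool" where
  "is_empty mem isSet E \<longleftrightarrow> isSet E \<and> (\<forall>a. \<not> mem a E)"

definition is_sing :: "('u \<Rightarrow> 'u \<Rightarrow> bool) \<Rightarrow> ('u \<Rightarrow> bool) \<Rightarrow> 'u \<Rightarrow> 'u \<Rightarrow> bool" where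
  "is_sing mem isSet A a \<longleftrightarrow> isSet A \<and> (\<forall>c. mem c A \<longleftrightarrow> c = a)"

inductive zord :: "('u \<Rightarrow> 'u \<Rightarrow> bool) \<Rightarrow> ('u \<Rightarrow> bool) \<Rightarrow> 'u \<Rightarrow> bool"
  for mem isSet where
  zord_zero: "is_empty mem isSet E \<Longrightarrow> zord mem isSet E"
| zord_succ: "zord mem isSet a \<Longrightarrow> is_sing mem isSet b a \<Longrightarrow> zord mem isSet b"

definition T_model ::
  "('u \<Rightarrow> 'u \<Rightarrow> bool) \<Rightarrow> ('u \<Rightarrow> bool) \<Rightarrow> ('u \<Rightarrow> 'u \<Rightarrow> bool)
   \<Rightarrow> ('u \<Rightarrow> 'u \<Rightarrow> 'u \<Rightarrow> bool) \<Rightarrow> ('u \<Rightarrow> 'u \<Rightarrow> 'u \<Rightarrow> bool) \<Rightarrow> bool" where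
  "T_model mem isSet onset dc mp \<longleftrightarrow>
    \<comment> \<open>sorts: every thing is a set or a function on a set\<close>
    (\<forall>a. isSet a \<or> (\<exists>X. isSet X \<and> onset a X)) \<and>
    (\<forall>f X. onset f X \<longrightarrow> isSet X) \<and>
    \<comment> \<open>extensionality for sets\<close>
    (\<forall>X Y. isSet X \<longrightarrow> isSet Y \<longrightarrow> (\<forall>a. mem a X \<longleftrightarrow> mem a Y) \<longrightarrow> X = Y) \<and>
    \<comment> \<open>no function on a set is a set\<close>
    (\<forall>f X. onset f X \<longrightarrow> \<not> isSet f) \<and>
    \<comment> \<open>a set has no domain or codomain and maps nothing to anything\<close>
    (\<forall>X. isSet X \<longrightarrow> (\<forall>Y Z. \<not> dc X Y Z) \<and> (\<forall>a b. \<not> mp X a b)) \<and>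
    \<comment> \<open>empty set\<close>
    (\<exists>E. is_empty mem isSet E) \<and>
    \<comment> \<open>pairing\<close>
    (\<forall>a b. \<exists>P. isSet P \<and> (\<forall>c. mem c P \<longleftrightarrow> c = a \<or> c = b)) \<and>
    \<comment> \<open>union\<close>
    (\<forall>X. isSet X \<longrightarrow> (\<exists>U. isSet U \<and> (\<forall>c. mem c U \<longleftrightarrow> (\<exists>Y. mem Y X \<and> mem c Y)))) \<and>
    \<comment> \<open>power set\<close>
    (\<forall>X. isSet X \<longrightarrow> (\<exists>P. isSet P \<and>
        (\<forall>c. mem c P \<longleftrightarrow> isSet c \<and> (\<forall>d. mem d c \<longrightarrow> mem d X)))) \<and>
    \<comment> \<open>infinity: the set of finite Zermelo ordinals exists\<close>
    (\<exists>W. isSet W \<and> (\<forall>a. mem a W \<longleftrightarrow> zord mem isSet a)) \<and>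
    \<comment> \<open>regularity\<close>
    (\<forall>X. isSet X \<longrightarrow> (\<exists>a. mem a X) \<longrightarrow> (\<exists>a. mem a X \<and> \<not> (\<exists>b. mem b a \<and> mem b X))) \<and>
    \<comment> \<open>a function on a set has no elements\<close>
    (\<forall>f X. onset f X \<longrightarrow> (\<forall>a. \<not> mem a f)) \<and>
    \<comment> \<open>GEN-F\<close>
    (\<forall>X f. isSet X \<longrightarrow> (\<exists>a. mem a X) \<longrightarrow> onset f X \<longrightarrow>
        (\<exists>Y Z. isSet Y \<and> isSet Z \<and> dc f Y Z \<and> (\<forall>a. mem a Y \<longrightarrow> (\<exists>!b. mp f a b)))) \<and>
    \<comment> \<open>f_X has no domain other than X\<close>
    (\<forall>X f Y Z. onset f X \<longrightarrow> isSet Y \<longrightarrow> isSet Z \<longrightarrow> dc f Y Z \<longrightarrow> Y = X) \<and>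
    \<comment> \<open>f_X maps only elements of X\<close>
    (\<forall>X f a b. onset f X \<longrightarrow> mp f a b \<longrightarrow> mem a X) \<and>
    \<comment> \<open>codomain is the image set\<close>
    (\<forall>X f b. isSet X \<longrightarrow> (\<exists>a. mem a X) \<longrightarrow> onset f X \<longrightarrow> dc f X b \<longrightarrow>
        isSet b \<and> (\<forall>c. mem c b \<longleftrightarrow> (\<exists>e. mem e X \<and> mp f e c))) \<and>
    \<comment> \<open>INV\<close>
    (\<forall>X f Y. isSet X \<longrightarrow> (\<exists>a. mem a X) \<longrightarrow> onset f X \<longrightarrow> isSet Y \<longrightarrow> dc f X Y \<longrightarrow>
        (\<forall>b. \<exists>S. isSet S \<and> (\<forall>a. mem a S \<longleftrightarrow> mem a X \<and> mp f a b))) \<and>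
    \<comment> \<open>EXT-F\<close>
    (\<forall>f X g Y. onset f X \<longrightarrow> onset g Y \<longrightarrow>
        (f = g \<longleftrightarrow> X = Y \<and> (\<forall>a b. mp f a b \<longleftrightarrow> mp g a b))) \<and>
    \<comment> \<open>inactive function on the empty set\<close>
    (\<exists>e E. is_empty mem isSet E \<and> onset e E \<and> dc e E E \<and> (\<forall>a b. \<not> mp e a b)) \<and>
    \<comment> \<open>UFA\<close>
    (\<forall>a b A B. is_sing mem isSet A a \<longrightarrow> is_sing mem isSet B b \<longrightarrow>
        (\<exists>f. onset f A \<and> dc f A B \<and> mp f a b)) \<and>
    \<comment> \<open>REG-F\<close>
    (\<forall>f X Y. onset f X \<longrightarrow> isSet Y \<longrightarrow> dc f X Y \<longrightarrow> (\<forall>a. \<not> mp f f a \<and> \<not> mp f a f)) \<and>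
    \<comment> \<open>SUM-F, families as (meta-level) functions assigning ur-functions\<close>
    (\<forall>X. isSet X \<longrightarrow> (\<exists>a. mem a X) \<longrightarrow>
      (\<forall>fam :: 'u \<Rightarrow> 'u.
        (\<forall>a. mem a X \<longrightarrow> (\<exists>A. is_sing mem isSet A a \<and> onset (fam a) A)) \<longrightarrow>
        (\<exists>F Y. isSet Y \<and> onset F X \<and> dc F X Y \<and>
           (\<forall>a. mem a X \<longrightarrow> mp F a (THE b. mp (fam a) a b)))))"

end

theory Submission
  imports Defs
begin

text \<open>Replacement is reduced to SUM-F: the class function \<open>x \<mapsto> the \<beta> with \<Phi>(x,\<beta>)\<close> is
  realised pointwise by ur-functions (UFA), SUM-F glues these into a single function on \<open>X\<close>,
  and the codomain of that function is the required image set.\<close>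

lemma T_model_pairing:
  assumes "T_model mem isSet onset dc mp"
  shows "\<exists>P. isSet P \<and> (\<forall>c. mem c P \<longleftrightarrow> c = a \<or> c = b)"
proof -
  have "\<forall>a b. \<exists>P. isSet P \<and> (\<forall>c. mem c P \<longleftrightarrow> c = a \<or> c = b)"
    using assms unfolding T_model_def by (elim conjE) assumption
  then show ?thesis by blast
qed

lemma T_model_total:
  assumes "T_model mem isSet onset dc mp" "isSet X" "mem a X" "onset f X"
  shows "\<exists>Y Z. isSet Y \<and> isSet Z \<and> dc f Y Z \<and> (\<forall>a. mem a Y \<longrightarrow> (\<exists>!b. mp f a b))"
proof -
  have "\<forall>X f. isSet X \<longrightarrow> (\<exists>a. mem a X) \<longrightarrow> onset f X \<longrightarrow>
          (\<exists>Y Z. isSet Y \<and> isSet Z \<and> dc f Y Z \<and> (\<forall>a. mem a Y \<longrightarrow> (\<exists>!b. mp f a b)))"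
    using assms(1) unfolding T_model_def by (elim conjE) assumption
  then show ?thesis using assms(2-4) by blast
qed

lemma T_model_domain_unique:
  assumes "T_model mem isSet onset dc mp" "onset f X" "isSet Y" "isSet Z" "dc f Y Z"
  shows "Y = X"
proof -
  have "\<forall>X f Y Z. onset f X \<longrightarrow> isSet Y \<longrightarrow> isSet Z \<longrightarrow> dc f Y Z \<longrightarrow> Y = X"
    using assms(1) unfolding T_model_def by (elim conjE) assumption
  then show ?thesis using assms(2-5) by blast
qed

lemma T_model_codomain_eq_image:
  assumes "T_model mem isSet onset dc mp" "isSet X" "mem a X" "onset f X" "dc f X Y"
  shows "mem c Y \<longleftrightarrow> (\<exists>x. mem x X \<and> mp f x c)"
proof -
  have "\<forall>X f b. isSet X \<longrightarrow> (\<exists>a. mem a X) \<longrightarrow> onset f X \<longrightarrow> dc f X b \<longrightarrow>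
          isSet b \<and> (\<forall>c. mem c b \<longleftrightarrow> (\<exists>e. mem e X \<and> mp f e c))"
    using assms(1) unfolding T_model_def by (elim conjE) assumption
  then show ?thesis using assms(2-5) by blast
qed

lemma T_model_ur_function:
  assumes "T_model mem isSet onset dc mp" "is_sing mem isSet A a" "is_sing mem isSet B b"
  shows "\<exists>f. onset f A \<and> dc f A B \<and> mp f a b"
proof -
  have "\<forall>a b A B. is_sing mem isSet A a \<longrightarrow> is_sing mem isSet B b \<longrightarrow>
          (\<exists>f. onset f A \<and> dc f A B \<and> mp f a b)"
    using assms(1) unfolding T_model_def by (elim conjE) assumption
  then show ?thesis using assms(2,3) by blast
qed

lemma T_model_sum_function:
  assumes "T_model mem isSet onset dc mp" "isSet X" "mem a X"
    and "\<forall>a. mem a X \<longrightarrow> (\<exists>A. is_sing mem isSet A a \<and> onset (fam a) A)"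
  shows "\<exists>F Y. isSet Y \<and> onset F X \<and> dc F X Y \<and>
           (\<forall>a. mem a X \<longrightarrow> mp F a (THE b. mp (fam a) a b))"
proof -
  have "\<forall>X. isSet X \<longrightarrow> (\<exists>a. mem a X) \<longrightarrow>
          (\<forall>fam.
            (\<forall>a. mem a X \<longrightarrow> (\<exists>A. is_sing mem isSet A a \<and> onset (fam a) A)) \<longrightarrow>
            (\<exists>F Y. isSet Y \<and> onset F X \<and> dc F X Y \<and>
               (\<forall>a. mem a X \<longrightarrow> mp F a (THE b. mp (fam a) a b))))"
    using assms(1) unfolding T_model_def by (elim conjE) assumption
  then show ?thesis using assms(2-4) by blast
qed

lemma T_model_singleton_exists:
  assumes "T_model mem isSet onset dc mp"
  shows "\<exists>A. is_sing mem isSet A a"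
  using T_model_pairing[OF assms, of a a] unfolding is_sing_def by blast

lemma T_model_maps_uniquely:
  assumes T: "T_model mem isSet onset dc mp" and "isSet X" "mem a X" "onset f X"
  shows "\<exists>!b. mp f a b"
proof -
  obtain Y Z where "isSet Y" "isSet Z" "dc f Y Z" "\<forall>a. mem a Y \<longrightarrow> (\<exists>!b. mp f a b)"
    using T_model_total[OF assms] by blast
  moreover have "Y = X"
    using T_model_domain_unique[OF T \<open>onset f X\<close>] calculation by blast
  ultimately show ?thesis using \<open>mem a X\<close> by blast
qed

lemma T_model_ur_function_exists:
  assumes "T_model mem isSet onset dc mp"
  shows "\<exists>f A. is_sing mem isSet A a \<and> onset f A \<and> mp f a b"
proof -
  obtain A B where "is_sing mem isSet A a" "is_sing mem isSet B b"
    using T_model_singleton_exists[OF assms] by blast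
  then show ?thesis using T_model_ur_function[OF assms] by blast
qed

text \<open>SUM-F for an arbitrary meta-level map \<open>g\<close>: choose for each \<open>a\<close> an ur-function
  sending \<open>a\<close> to \<open>g a\<close>.\<close>

lemma T_model_function_exists:
  assumes T: "T_model mem isSet onset dc mp" and "isSet X" "mem x X"
  shows "\<exists>F Y. isSet Y \<and> onset F X \<and> dc F X Y \<and> (\<forall>a. mem a X \<longrightarrow> mp F a (g a))"
proof -
  define fam where "fam a = (SOME f. \<exists>A. is_sing mem isSet A a \<and> onset f A \<and> mp f a (g a))" for a
  have fam: "\<exists>A. is_sing mem isSet A a \<and> onset (fam a) A \<and> mp (fam a) a (g a)" for a
    unfolding fam_def using someI_ex[OF T_model_ur_function_exists[OF T]] by blast
  have fam_value: "(THE b. mp (fam a) a b) = g a" for a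
  proof -
    obtain A where A: "is_sing mem isSet A a" "onset (fam a) A" "mp (fam a) a (g a)"
      using fam by blast
    then have "\<exists>!b. mp (fam a) a b"
      using T_model_maps_uniquely[OF T, of A a "fam a"] unfolding is_sing_def by blast
    then show ?thesis using A(3) by blast
  qed
  show ?thesis
    using T_model_sum_function[OF T assms(2,3), of fam] fam unfolding fam_value by blast
qed

lemma T_model_image_exists:
  assumes T: "T_model mem isSet onset dc mp" and "isSet X"
  shows "\<exists>Z. isSet Z \<and> (\<forall>c. mem c Z \<longleftrightarrow> (\<exists>x. mem x X \<and> c = g x))"
proof (cases "\<exists>x. mem x X")
  case False
  then show ?thesis using \<open>isSet X\<close> by blast
next
  case True
  then obtain x where "mem x X" ..
  obtain F Y where F: "isSet Y" "onset F X" "dc F X Y" "\<forall>a. mem a X \<longrightarrow> mp F a (g a)"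
    using T_model_function_exists[OF T \<open>isSet X\<close> \<open>mem x X\<close>] by blast
  have "mem c Y \<longleftrightarrow> (\<exists>x. mem x X \<and> mp F x c)" for c
    using T_model_codomain_eq_image[OF T \<open>isSet X\<close> \<open>mem x X\<close> F(2,3)] .
  moreover have "mem a X \<Longrightarrow> mp F a c \<longleftrightarrow> c = g a" for a c
    using T_model_maps_uniquely[OF T \<open>isSet X\<close> _ F(2)] F(4) by blast
  ultimately show ?thesis using F(1) by blast
qed

theorem mainTheorem4:
  fixes mem :: "'u \<Rightarrow> 'u \<Rightarrow> bool" and isSet :: "'u \<Rightarrow> bool"
    and onset :: "'u \<Rightarrow> 'u \<Rightarrow> bool"
    and dc :: "'u \<Rightarrow> 'u \<Rightarrow> 'u \<Rightarrow> bool" and mp :: "'u \<Rightarrow> 'u \<Rightarrow> 'u \<Rightarrow> bool"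
    and \<Phi> :: "'u \<Rightarrow> 'u \<Rightarrow> bool"
  assumes "T_model mem isSet onset dc mp"
  shows "\<forall>X. isSet X \<longrightarrow> (\<forall>a. mem a X \<longrightarrow> (\<exists>!b. \<Phi> a b)) \<longrightarrow>
           (\<exists>Z. isSet Z \<and> (\<forall>c. mem c Z \<longleftrightarrow> (\<exists>x. mem x X \<and> \<Phi> x c)))"
proof (intro allI impI)
  fix X assume "isSet X" and functional: "\<forall>a. mem a X \<longrightarrow> (\<exists>!b. \<Phi> a b)"
  have \<Phi>_iff: "mem x X \<Longrightarrow> \<Phi> x c \<longleftrightarrow> c = (THE b. \<Phi> x b)" for x c
    using functional by (metis theI the_equality)
  obtain Z where "isSet Z" "\<forall>c. mem c Z \<longleftrightarrow> (\<exists>x. mem x X \<and> c = (THE b. \<Phi> x b))"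
    using T_model_image_exists[OF assms \<open>isSet X\<close>, of "\<lambda>x. THE b. \<Phi> x b"] by blast
  then show "\<exists>Z. isSet Z \<and> (\<forall>c. mem c Z \<longleftrightarrow> (\<exists>x. mem x X \<and> \<Phi> x c))"
    using \<Phi>_iff by blast
qed

end
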